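(* Let $l$ be a positive integer such that for every $i\in\mathcal{V}$ there exist $l$ matrices in $\mathcal{M}$ (possibly repeated) whose product, in some order, has all entries of its column indexed by $i$ strictly positive, and let $w>0$ be the probability that $W_1=M_1M_2\cdots M_l$ is scrambling (i.e. $\lambda(W_1)<1$). Let $T_k=M_1M_2\cdots M_k$. Then there exist constants $\alpha,\beta$ with $0<\alpha<1$ and $0\le\beta<1$ such that for every $k\ge 8l/w$, with probability greater than $1-\alpha^k$, $\delta(T_k)\le\beta^k$.
   Context: Let $\mathcal{G}=(\mathcal{V},\mathcal{E})$ be a strongly connected directed graph with $\mathcal{V}=\{1,\dots,m\}$, with a self-loop $(i,i)\in\mathcal{E}$ at every node. Let $\mathcal{O}_i=\{j:(i,j)\in\mathcal{E}\}$ and $D_i=|\mathcal{O}_i|$. At each time step $k\ge1$ each link $(i,j)\in\mathcal{E}$ is reliable with probability $q_{ij}\in(0,1]$, independently across links and across time steps; let $X_k[i,j]=1$ if $(i,j)$ is reliable at step $k$ and $0$ otherwise. Let $n=m+|\mathcal{E}|$ and index rows/columns of $n\times n$ matrices by $\mathcal{V}\cup\mathcal{E}$. The random matrix $M_k$ is defined by: for $i\in\mathcal{V}$ and $(i,j)\in\mathcal{E}$, $M_k[i,j]=X_k[i,j]/D_i$ and $M_k[i,(i,j)]=(1-X_k[i,j])/D_i$, all other entries of row $i$ being $0$; for $(i,j)\in\mathcal{E}$, $M_k[(i,j),j]=X_k[i,j]$ and $M_k[(i,j),(i,j)]=1-X_k[i,j]$, all other entries of row $(i,j)$ being $0$. $\mathcal{M}$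 denotes the finite set of all $2^{|\mathcal{E}|}$ matrices obtainable this way. For a row stochastic matrix $A$: $\delta(A)=\max_j\max_{i_1,i_2}|A[i_1,j]-A[i_2,j]|$ and $\lambda(A)=1-\min_{i_1,i_2}\sum_j\min(A[i_1,j],A[i_2,j])$; $A$ is scrambling if $\lambda(A)<1$. *)

theory Defs
  imports Complex_Main
begin

text \<open>Index set of the n x n matrices: nodes (Inl i) and links (Inr (i,j)).\<close>
type_synonym 'a idx = "'a + ('a \<times> 'a)"
type_synonym 'a mat = "'a idx \<Rightarrow> 'a idx \<Rightarrow> real"

definition idxset :: "'a set \<Rightarrow> ('a \<times> 'a) set \<Rightarrow> 'a idx set" where
  "idxset V E = Inl ` V \<union> Inr ` E"

definition outdeg :: "('a \<times> 'a) set \<Rightarrow> 'a \<Rightarrow> nat" where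
  "outdeg E i = card {j. (i, j) \<in> E}"

text \<open>The matrix M determined by the set S of reliable links (S \<subseteq> E).\<close>
fun Mmat :: "('a \<times> 'a) set \<Rightarrow> ('a \<times> 'a) set \<Rightarrow> 'a mat" where
  "Mmat E S (Inl i) (Inl j) =
     (if (i, j) \<in> E \<and> (i, j) \<in> S then 1 / real (outdeg E i) else 0)"
| "Mmat E S (Inl i) (Inr (i', j)) =
     (if i' = i \<and> (i, j) \<in> E \<and> (i, j) \<notin> S then 1 / real (outdeg E i) else 0)"
| "Mmat E S (Inr (i, j)) (Inl j') =
     (if (i, j) \<in> E \<and> j' = j \<and> (i, j) \<in> S then 1 else 0)"
| "Mmat E S (Inr e) (Inr e') =
     (if e \<in> E \<and> e' = e \<and> e \<notin> S then 1 else 0)"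

definition mmul :: "'a idx set \<Rightarrow> 'a mat \<Rightarrow> 'a mat \<Rightarrow> 'a mat" where
  "mmul I A B = (\<lambda>x y. \<Sum>z\<in>I. A x z * B z y)"

definition mid :: "'a mat" where
  "mid = (\<lambda>x y. if x = y then 1 else 0)"

fun mprod :: "'a idx set \<Rightarrow> 'a mat list \<Rightarrow> 'a mat" where
  "mprod I [] = mid"
| "mprod I (A # As) = mmul I A (mprod I As)"

definition delta :: "'a idx set \<Rightarrow> 'a mat \<Rightarrow> real" where
  "delta I A = Max {\<bar>A i1 j - A i2 j\<bar> | j i1 i2. j \<in> I \<and> i1 \<in> I \<and> i2 \<in> I}"

definition lam :: "'a idx set \<Rightarrow> 'a mat \<Rightarrow> real" where
  "lam I A = 1 - Min {(\<Sum>j\<in>I. min (A i1 j) (A i2 j)) | i1 i2. i1 \<in> I \<and> i2 \<in> I}"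

definition scrambling :: "'a idx set \<Rightarrow> 'a mat \<Rightarrow> bool" where
  "scrambling I A \<longleftrightarrow> lam I A < 1"

definition cfgp :: "('a \<times> 'a) set \<Rightarrow> ('a \<times> 'a \<Rightarrow> real) \<Rightarrow> ('a \<times> 'a) set \<Rightarrow> real" where
  "cfgp E q S = (\<Prod>e\<in>S. q e) * (\<Prod>e\<in>E - S. 1 - q e)"

definition seqs :: "('a \<times> 'a) set \<Rightarrow> nat \<Rightarrow> ('a \<times> 'a) set list set" where
  "seqs E k = {Ss. length Ss = k \<and> (\<forall>S\<in>set Ss. S \<subseteq> E)}"

definition prob_k :: "('a \<times> 'a) set \<Rightarrow> ('a \<times> 'a \<Rightarrow> real) \<Rightarrow> nat
    \<Rightarrow> (('a \<times> 'a) set list \<Rightarrow> bool) \<Rightarrow> real" where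
  "prob_k E q k P = (\<Sum>Ss\<in>{Ss \<in> seqs E k. P Ss}. \<Prod>S\<leftarrow>Ss. cfgp E q S)"

text \<open>T_k = M_1 M_2 ... M_k for the configuration sequence Ss = [X_1,...,X_k].\<close>
definition Tprod :: "'a set \<Rightarrow> ('a \<times> 'a) set \<Rightarrow> ('a \<times> 'a) set list \<Rightarrow> 'a mat" where
  "Tprod V E Ss = mprod (idxset V E) (map (Mmat E) Ss)"

end

theory Submission
  imports Defs
begin

text \<open>For stochastic A and B one has \<open>\<delta>(AB) \<le> \<lambda>(A) \<delta>(B)\<close>. Splitting T_k into blocks of
  length l and using the independence of the configurations of different steps, the
  expectation of \<open>\<delta>(T_k)\<close> is at most \<open>\<rho>\<^sup>\<lfloor>k/l\<rfloor>\<close>, where \<open>\<rho>\<close> is the expectation of \<open>\<lambda>(W_1)\<close>;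
  and \<open>\<rho> < 1\<close> because W_1 is scrambling with positive probability. Markov's inequality turns
  this exponential bound on the mean into the tail bound.\<close>

section \<open>Stochastic matrices and the coefficients \<delta> and \<lambda>\<close>

definition stochastic :: "'a idx set \<Rightarrow> 'a mat \<Rightarrow> bool" where
  "stochastic I A \<longleftrightarrow> (\<forall>x\<in>I. \<forall>y\<in>I. 0 \<le> A x y) \<and> (\<forall>x\<in>I. (\<Sum>y\<in>I. A x y) = 1)"

lemma stochastic_entry_le_one:
  assumes "finite I" "stochastic I A" "x \<in> I" "y \<in> I"
  shows "A x y \<le> 1"
proof -
  have "A x y \<le> (\<Sum>z\<in>I. A x z)"
    using assms by (intro member_le_sum) (auto simp: stochastic_def)
  thus ?thesis using assms by (simp add: stochastic_def)
qed

lemma stochastic_mmul: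
  assumes "stochastic I A" "stochastic I B"
  shows "stochastic I (mmul I A B)"
  unfolding stochastic_def
proof safe
  fix x y assume "x \<in> I" "y \<in> I"
  thus "0 \<le> mmul I A B x y"
    using assms unfolding mmul_def stochastic_def by (intro sum_nonneg) auto
next
  fix x assume x: "x \<in> I"
  have "(\<Sum>y\<in>I. mmul I A B x y) = (\<Sum>z\<in>I. A x z * (\<Sum>y\<in>I. B z y))"
    unfolding mmul_def by (subst sum.swap) (simp add: sum_distrib_left)
  also have "\<dots> = 1"
    using assms x by (simp add: stochastic_def)
  finally show "(\<Sum>y\<in>I. mmul I A B x y) = 1" .
qed

lemma stochastic_mid: "finite I \<Longrightarrow> stochastic I mid"
  by (simp add: stochastic_def mid_def)

lemma stochastic_mprod:
  "finite I \<Longrightarrow> \<forall>A\<in>set As. stochastic I A \<Longrightarrow> stochastic I (mprod I As)"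
  by (induction As) (auto simp: stochastic_mid stochastic_mmul)

lemma mmul_mid_left:
  assumes "finite I" "x \<in> I"
  shows "mmul I mid B x y = B x y"
proof -
  have "mmul I mid B x y = (\<Sum>z\<in>I. if x = z then B z y else 0)"
    unfolding mmul_def by (rule sum.cong) (auto simp: mid_def)
  thus ?thesis using assms by simp
qed

lemma mmul_assoc:
  "mmul I (mmul I A B) C x y = mmul I A (mmul I B C) x y"
proof -
  have "mmul I (mmul I A B) C x y = (\<Sum>w\<in>I. \<Sum>z\<in>I. A x z * (B z w * C w y))"
    unfolding mmul_def by (simp add: sum_distrib_right mult.assoc)
  also have "\<dots> = mmul I A (mmul I B C) x y"
    unfolding mmul_def by (subst sum.swap) (simp add: sum_distrib_left)
  finally show ?thesis .
qed

lemma mprod_append: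
  assumes "finite I" "x \<in> I"
  shows "mprod I (As @ Bs) x y = mmul I (mprod I As) (mprod I Bs) x y"
  using assms(2)
proof (induction As arbitrary: x)
  case Nil
  thus ?case using assms(1) by (simp add: mmul_mid_left)
next
  case (Cons A As)
  have "mprod I ((A # As) @ Bs) x y = mmul I A (mmul I (mprod I As) (mprod I Bs)) x y"
    using Cons.IH by (simp add: mmul_def)
  thus ?case by (simp add: mmul_assoc)
qed

lemma delta_eq_Max:
  "delta I A = Max ((\<lambda>(j, i1, i2). \<bar>A i1 j - A i2 j\<bar>) ` (I \<times> I \<times> I))"
proof -
  have "{\<bar>A i1 j - A i2 j\<bar> | j i1 i2. j \<in> I \<and> i1 \<in> I \<and> i2 \<in> I}
      = (\<lambda>(j, i1, i2). \<bar>A i1 j - A i2 j\<bar>) ` (I \<times> I \<times> I)"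
    by (auto simp: image_iff) blast
  thus ?thesis by (simp add: delta_def)
qed

lemma lam_eq_Min:
  "lam I A = 1 - Min ((\<lambda>(i1, i2). \<Sum>j\<in>I. min (A i1 j) (A i2 j)) ` (I \<times> I))"
proof -
  have "{(\<Sum>j\<in>I. min (A i1 j) (A i2 j)) | i1 i2. i1 \<in> I \<and> i2 \<in> I}
      = (\<lambda>(i1, i2). \<Sum>j\<in>I. min (A i1 j) (A i2 j)) ` (I \<times> I)"
    by auto
  thus ?thesis by (simp add: lam_def)
qed

lemma delta_cong:
  assumes "\<And>x y. x \<in> I \<Longrightarrow> y \<in> I \<Longrightarrow> A x y = B x y"
  shows "delta I A = delta I B"
  unfolding delta_eq_Max using assms by (intro arg_cong[where f = Max] image_cong) auto

lemma abs_diff_le_delta: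
  assumes "finite I" "j \<in> I" "i1 \<in> I" "i2 \<in> I"
  shows "\<bar>A i1 j - A i2 j\<bar> \<le> delta I A"
  unfolding delta_eq_Max using assms by (intro Max_ge) force+

lemma delta_le_iff:
  assumes "finite I" "I \<noteq> {}"
  shows "delta I A \<le> c \<longleftrightarrow> (\<forall>j\<in>I. \<forall>i1\<in>I. \<forall>i2\<in>I. \<bar>A i1 j - A i2 j\<bar> \<le> c)"
  unfolding delta_eq_Max using assms by (subst Max_le_iff) auto

lemma delta_nonneg:
  assumes "finite I" "I \<noteq> {}"
  shows "0 \<le> delta I A"
proof -
  obtain i where "i \<in> I" using assms(2) by blast
  thus ?thesis using abs_diff_le_delta[OF assms(1), of i i i A] by simp
qed

lemma delta_le_one:
  assumes "finite I" "I \<noteq> {}" "stochastic I A"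
  shows "delta I A \<le> 1"
  unfolding delta_le_iff[OF assms(1,2)]
proof (intro ballI)
  fix j i1 i2 assume "j \<in> I" "i1 \<in> I" "i2 \<in> I"
  with assms stochastic_entry_le_one[OF assms(1,3)]
  have "0 \<le> A i1 j" "0 \<le> A i2 j" "A i1 j \<le> 1" "A i2 j \<le> 1"
    by (simp_all add: stochastic_def)
  thus "\<bar>A i1 j - A i2 j\<bar> \<le> 1" by linarith
qed

lemma one_minus_overlap_le_lam:
  assumes "finite I" "i1 \<in> I" "i2 \<in> I"
  shows "1 - (\<Sum>j\<in>I. min (A i1 j) (A i2 j)) \<le> lam I A"
proof -
  have "Min ((\<lambda>(i1, i2). \<Sum>j\<in>I. min (A i1 j) (A i2 j)) ` (I \<times> I))
      \<le> (\<Sum>j\<in>I. min (A i1 j) (A i2 j))"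
    using assms by (intro Min_le) force+
  thus ?thesis unfolding lam_eq_Min by linarith
qed

lemma lam_nonneg:
  assumes "finite I" "I \<noteq> {}" "stochastic I A"
  shows "0 \<le> lam I A"
proof -
  obtain i where i: "i \<in> I" using assms(2) by blast
  have "(\<Sum>j\<in>I. min (A i j) (A i j)) = 1" using assms(3) i by (simp add: stochastic_def)
  thus ?thesis using one_minus_overlap_le_lam[OF assms(1) i i, of A] by simp
qed

lemma lam_le_one:
  assumes "finite I" "I \<noteq> {}" "stochastic I A"
  shows "lam I A \<le> 1"
proof -
  have "0 \<le> (\<Sum>j\<in>I. min (A i1 j) (A i2 j))" if "i1 \<in> I" "i2 \<in> I" for i1 i2
    using assms(3) that by (intro sum_nonneg) (simp add: stochastic_def)
  hence "0 \<le> Min ((\<lambda>(i1, i2). \<Sum>j\<in>I. min (A i1 j) (A i2 j)) ` (I \<times> I))"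
    using assms(1,2) by (subst Min_ge_iff) auto
  thus ?thesis unfolding lam_eq_Min by linarith
qed

text \<open>Only the part of each row exceeding the common part \<open>min (A i1 z) (A i2 z)\<close> feels
  the spread of x, and that excess has total mass \<open>1 - \<Sum>z. min (A i1 z) (A i2 z)\<close>.\<close>

lemma weighted_diff_le_overlap:
  assumes "stochastic I A" "i1 \<in> I" "i2 \<in> I"
    and bounds: "\<And>z. z \<in> I \<Longrightarrow> m \<le> x z \<and> x z \<le> M"
  shows "(\<Sum>z\<in>I. A i1 z * x z) - (\<Sum>z\<in>I. A i2 z * x z)
      \<le> (1 - (\<Sum>z\<in>I. min (A i1 z) (A i2 z))) * (M - m)"
proof -
  define c where "c z = min (A i1 z) (A i2 z)" for z
  have rows: "(\<Sum>z\<in>I. A i1 z) = 1" "(\<Sum>z\<in>I. A i2 z) = 1"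
    using assms(1-3) by (auto simp: stochastic_def)
  have "(\<Sum>z\<in>I. A i1 z * x z) \<le> (\<Sum>z\<in>I. c z * x z + (A i1 z - c z) * M)"
  proof (rule sum_mono)
    fix z assume "z \<in> I"
    hence "0 \<le> (A i1 z - c z) * (M - x z)"
      using bounds by (intro mult_nonneg_nonneg) (auto simp: c_def)
    thus "A i1 z * x z \<le> c z * x z + (A i1 z - c z) * M" by (simp add: algebra_simps)
  qed
  also have "\<dots> = (\<Sum>z\<in>I. c z * x z) + (1 - sum c I) * M"
    using rows by (simp add: sum.distrib sum_distrib_right[symmetric] sum_subtractf)
  finally have upper: "(\<Sum>z\<in>I. A i1 z * x z) \<le> (\<Sum>z\<in>I. c z * x z) + (1 - sum c I) * M" .
  have "(\<Sum>z\<in>I. c z * x z) + (1 - sum c I) * m = (\<Sum>z\<in>I. c z * x z + (A i2 z - c z) * m)"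
    using rows by (simp add: sum.distrib sum_distrib_right[symmetric] sum_subtractf)
  also have "\<dots> \<le> (\<Sum>z\<in>I. A i2 z * x z)"
  proof (rule sum_mono)
    fix z assume "z \<in> I"
    hence "0 \<le> (A i2 z - c z) * (x z - m)"
      using bounds by (intro mult_nonneg_nonneg) (auto simp: c_def)
    thus "c z * x z + (A i2 z - c z) * m \<le> A i2 z * x z" by (simp add: algebra_simps)
  qed
  finally have lower: "(\<Sum>z\<in>I. c z * x z) + (1 - sum c I) * m \<le> (\<Sum>z\<in>I. A i2 z * x z)" .
  show ?thesis using upper lower unfolding c_def by (simp add: algebra_simps)
qed

lemma delta_mmul_le:
  assumes "finite I" "I \<noteq> {}" "stochastic I A" "stochastic I B"
  shows "delta I (mmul I A B) \<le> lam I A * delta I B"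
  unfolding delta_le_iff[OF assms(1,2)]
proof (intro ballI)
  fix j i1 i2 assume j: "j \<in> I" and i: "i1 \<in> I" "i2 \<in> I"
  define col where "col = (\<lambda>z. B z j) ` I"
  have col: "finite col" "col \<noteq> {}" using assms(1,2) by (auto simp: col_def)
  have bounds: "\<And>z. z \<in> I \<Longrightarrow> Min col \<le> B z j \<and> B z j \<le> Max col"
    using col by (auto simp: col_def)
  obtain z1 z2 where z: "z1 \<in> I" "z2 \<in> I" "Max col = B z1 j" "Min col = B z2 j"
    using Max_in[OF col] Min_in[OF col] by (auto simp: col_def)
  have spread: "0 \<le> Max col - Min col" "Max col - Min col \<le> delta I B"
    using bounds[OF z(1)] abs_diff_le_delta[OF assms(1) j z(1,2), of B] z by auto
  have "mmul I A B i1 j - mmul I A B i2 j \<le> lam I A * delta I B"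
    if "i1 \<in> I" "i2 \<in> I" for i1 i2
  proof -
    have "mmul I A B i1 j - mmul I A B i2 j
        \<le> (1 - (\<Sum>z\<in>I. min (A i1 z) (A i2 z))) * (Max col - Min col)"
      unfolding mmul_def by (rule weighted_diff_le_overlap[OF assms(3) that bounds])
    also have "\<dots> \<le> lam I A * delta I B"
      using one_minus_overlap_le_lam[OF assms(1) that] lam_nonneg[OF assms(1-3)] spread
      by (intro mult_mono) auto
    finally show ?thesis .
  qed
  from this[OF i] this[OF i(2,1)]
  show "\<bar>mmul I A B i1 j - mmul I A B i2 j\<bar> \<le> lam I A * delta I B" by linarith
qed

section \<open>The matrices M_k and T_k\<close>

lemma finite_idxset: "finite V \<Longrightarrow> finite E \<Longrightarrow> finite (idxset V E)"
  unfolding idxset_def by simp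

lemma idxset_not_empty: "V \<noteq> {} \<Longrightarrow> idxset V E \<noteq> {}"
  unfolding idxset_def by simp

lemma sum_idxset:
  assumes "finite V" "finite E"
  shows "sum f (idxset V E) = (\<Sum>i\<in>V. f (Inl i)) + (\<Sum>e\<in>E. f (Inr e))"
proof -
  have "sum f (idxset V E) = sum f (Inl ` V) + sum f (Inr ` E)"
    unfolding idxset_def using assms by (intro sum.union_disjoint) auto
  thus ?thesis by (simp add: sum.reindex)
qed

lemma Mmat_nonneg: "0 \<le> Mmat E S x y"
  by (induction E S x y rule: Mmat.induct) auto

lemma Mmat_node_row_sum:
  assumes finV: "finite V" and EV: "E \<subseteq> V \<times> V" and loop: "(i, i) \<in> E"
  shows "(\<Sum>y\<in>idxset V E. Mmat E S (Inl i) y) = 1"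
proof -
  have finE: "finite E" using finV EV finite_subset by blast
  define N where "N = {j. (i, j) \<in> E}"
  define d where "d = real (outdeg E i)"
  have NV: "N \<subseteq> V" using EV by (auto simp: N_def)
  have "finite N" using NV finV finite_subset by blast
  moreover have "i \<in> N" using loop by (simp add: N_def)
  ultimately have d: "d = real (card N)" "0 < d"
    by (auto simp: d_def outdeg_def N_def[symmetric] card_gt_0_iff)
  have nodes: "(\<Sum>j\<in>V. Mmat E S (Inl i) (Inl j)) = (\<Sum>j\<in>N. if (i, j) \<in> S then 1 / d else 0)"
  proof -
    have "(\<Sum>j\<in>V. Mmat E S (Inl i) (Inl j))
        = (\<Sum>j\<in>V. if j \<in> N then (if (i, j) \<in> S then 1 / d else 0) else 0)"
      by (rule sum.cong) (auto simp: N_def d_def)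
    also have "\<dots> = (\<Sum>j\<in>N. if (i, j) \<in> S then 1 / d else 0)"
      using finV NV by (simp add: Int_absorb1 flip: sum.inter_restrict)
    finally show ?thesis .
  qed
  have links: "(\<Sum>e\<in>E. Mmat E S (Inl i) (Inr e)) = (\<Sum>j\<in>N. if (i, j) \<in> S then 0 else 1 / d)"
  proof -
    have "(\<Sum>e\<in>E. Mmat E S (Inl i) (Inr e))
        = (\<Sum>e\<in>E. if fst e = i then (if e \<in> S then 0 else 1 / d) else 0)"
      by (rule sum.cong) (auto simp: d_def)
    also have "\<dots> = (\<Sum>e\<in>{e\<in>E. fst e = i}. if e \<in> S then 0 else 1 / d)"
      using finE by (simp add: sum.inter_filter)
    also have "{e\<in>E. fst e = i} = Pair i ` N"
      by (auto simp: N_def)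
    also have "(\<Sum>e\<in>Pair i ` N. if e \<in> S then 0 else 1 / d) = (\<Sum>j\<in>N. if (i, j) \<in> S then 0 else 1 / d)"
      by (subst sum.reindex) (auto simp: inj_on_def)
    finally show ?thesis .
  qed
  have "(\<Sum>y\<in>idxset V E. Mmat E S (Inl i) y) = (\<Sum>j\<in>N. 1 / d)"
    unfolding sum_idxset[OF finV finE] nodes links sum.distrib[symmetric]
    by (rule sum.cong) auto
  thus ?thesis using d by simp
qed

lemma Mmat_link_row_sum:
  assumes finV: "finite V" and EV: "E \<subseteq> V \<times> V" and e: "(a, b) \<in> E"
  shows "(\<Sum>y\<in>idxset V E. Mmat E S (Inr (a, b)) y) = 1"
proof -
  have finE: "finite E" using finV EV finite_subset by blast
  have "b \<in> V" using EV e by auto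
  have "(\<Sum>j\<in>V. Mmat E S (Inr (a, b)) (Inl j)) = (\<Sum>j\<in>V. if j = b then of_bool ((a, b) \<in> S) else 0)"
    by (rule sum.cong) (use e in auto)
  also have "\<dots> = of_bool ((a, b) \<in> S)"
    using finV \<open>b \<in> V\<close> by simp
  finally have nodes: "(\<Sum>j\<in>V. Mmat E S (Inr (a, b)) (Inl j)) = of_bool ((a, b) \<in> S)" .
  have "(\<Sum>e'\<in>E. Mmat E S (Inr (a, b)) (Inr e')) = (\<Sum>e'\<in>E. if e' = (a, b) then of_bool ((a, b) \<notin> S) else 0)"
    by (rule sum.cong) (use e in auto)
  also have "\<dots> = of_bool ((a, b) \<notin> S)"
    using finE e by simp
  finally have links: "(\<Sum>e'\<in>E. Mmat E S (Inr (a, b)) (Inr e')) = of_bool ((a, b) \<notin> S)" .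
  show ?thesis unfolding sum_idxset[OF finV finE] nodes links by simp
qed

lemma stochastic_Mmat:
  assumes "finite V" "E \<subseteq> V \<times> V" "\<forall>i\<in>V. (i, i) \<in> E"
  shows "stochastic (idxset V E) (Mmat E S)"
  unfolding stochastic_def
proof (intro conjI ballI)
  fix x assume "x \<in> idxset V E"
  then consider i where "i \<in> V" "x = Inl i" | a b where "(a, b) \<in> E" "x = Inr (a, b)"
    by (auto simp: idxset_def)
  thus "(\<Sum>y\<in>idxset V E. Mmat E S x y) = 1"
    by cases (simp_all add: Mmat_node_row_sum[OF assms(1,2)] Mmat_link_row_sum[OF assms(1,2)] assms(3))
qed (rule Mmat_nonneg)

lemma stochastic_Tprod:
  assumes "finite V" "E \<subseteq> V \<times> V" "\<forall>i\<in>V. (i, i) \<in> E"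
  shows "stochastic (idxset V E) (Tprod V E Ss)"
proof -
  have "finite E" using assms(1,2) finite_subset by blast
  thus ?thesis unfolding Tprod_def
    using assms by (intro stochastic_mprod finite_idxset) (auto intro: stochastic_Mmat)
qed

lemma delta_Tprod_append_le:
  assumes fV: "finite V" and ne: "V \<noteq> {}" and EV: "E \<subseteq> V \<times> V" and loops: "\<forall>i\<in>V. (i, i) \<in> E"
  shows "delta (idxset V E) (Tprod V E (Ss @ Ts))
     \<le> lam (idxset V E) (Tprod V E Ss) * delta (idxset V E) (Tprod V E Ts)"
proof -
  let ?I = "idxset V E"
  have fI: "finite ?I" using fV EV finite_subset by (blast intro: finite_idxset)
  have "delta ?I (Tprod V E (Ss @ Ts)) = delta ?I (mmul ?I (Tprod V E Ss) (Tprod V E Ts))"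
    unfolding Tprod_def map_append by (rule delta_cong) (rule mprod_append[OF fI])
  also have "\<dots> \<le> lam ?I (Tprod V E Ss) * delta ?I (Tprod V E Ts)"
    by (intro delta_mmul_le fI idxset_not_empty[OF ne] stochastic_Tprod[OF fV EV loops])
  finally show ?thesis .
qed

section \<open>Expectations over configuration sequences\<close>

definition seq_weight :: "('a \<times> 'a) set \<Rightarrow> ('a \<times> 'a \<Rightarrow> real) \<Rightarrow> ('a \<times> 'a) set list \<Rightarrow> real" where
  "seq_weight E q Ss = (\<Prod>S\<leftarrow>Ss. cfgp E q S)"

definition expect_k :: "('a \<times> 'a) set \<Rightarrow> ('a \<times> 'a \<Rightarrow> real) \<Rightarrow> nat
    \<Rightarrow> (('a \<times> 'a) set list \<Rightarrow> real) \<Rightarrow> real" where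
  "expect_k E q k f = (\<Sum>Ss\<in>seqs E k. seq_weight E q Ss * f Ss)"

lemma finite_seqs: "finite E \<Longrightarrow> finite (seqs E k)"
proof -
  assume "finite E"
  moreover have "seqs E k = {Ss. set Ss \<subseteq> Pow E \<and> length Ss = k}"
    by (auto simp: seqs_def)
  ultimately show ?thesis by (simp add: finite_lists_length_eq)
qed

lemma seqs_add: "seqs E (a + b) = (\<lambda>(Ss, Ts). Ss @ Ts) ` (seqs E a \<times> seqs E b)"
proof (intro set_eqI iffI)
  fix Ss assume "Ss \<in> seqs E (a + b)"
  hence "take a Ss \<in> seqs E a" "drop a Ss \<in> seqs E b"
    by (auto simp: seqs_def dest: in_set_takeD in_set_dropD)
  thus "Ss \<in> (\<lambda>(Ss, Ts). Ss @ Ts) ` (seqs E a \<times> seqs E b)"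
    by (intro image_eqI[where x = "(take a Ss, drop a Ss)"]) auto
qed (unfold seqs_def, fastforce)

lemma seq_weight_nonneg:
  assumes "Ss \<in> seqs E k" "\<forall>e\<in>E. 0 \<le> q e \<and> q e \<le> 1"
  shows "0 \<le> seq_weight E q Ss"
proof -
  have "0 \<le> cfgp E q S" if "S \<subseteq> E" for S
    unfolding cfgp_def using assms(2) that
    by (intro mult_nonneg_nonneg prod_nonneg) (auto simp: subset_iff)
  thus ?thesis using assms(1) unfolding seq_weight_def seqs_def by (intro prod_list_nonneg) auto
qed

lemma expect_k_add:
  "expect_k E q (a + b) (\<lambda>Ss. f (take a Ss) * g (drop a Ss)) = expect_k E q a f * expect_k E q b g"
proof -
  have inj: "inj_on (\<lambda>(Ss, Ts). Ss @ Ts) (seqs E a \<times> seqs E b)"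
    by (auto simp: inj_on_def seqs_def)
  have "expect_k E q (a + b) (\<lambda>Ss. f (take a Ss) * g (drop a Ss))
      = (\<Sum>(Ss, Ts)\<in>seqs E a \<times> seqs E b. (seq_weight E q Ss * f Ss) * (seq_weight E q Ts * g Ts))"
    unfolding expect_k_def seqs_add sum.reindex[OF inj]
    by (rule sum.cong) (auto simp: seqs_def seq_weight_def)
  thus ?thesis by (simp add: expect_k_def sum_product sum.cartesian_product)
qed

lemma expect_k_one:
  assumes "finite E"
  shows "expect_k E q k (\<lambda>_. 1) = 1"
proof (induction k)
  case 0
  have "seqs E 0 = {[]}" by (auto simp: seqs_def)
  thus ?case by (simp add: expect_k_def seq_weight_def)
next
  case (Suc k)
  have "seqs E 1 = (\<lambda>S. [S]) ` Pow E"
    by (auto simp: seqs_def length_Suc_conv)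
  moreover have "(\<Sum>S\<in>Pow E. cfgp E q S) = 1"
    using prod_add[OF assms, of q "\<lambda>e. 1 - q e"] by (simp add: cfgp_def)
  ultimately have "expect_k E q 1 (\<lambda>_. 1) = 1"
    by (simp add: expect_k_def seq_weight_def sum.reindex inj_on_def)
  thus ?case using expect_k_add[of E q 1 k "\<lambda>_. 1" "\<lambda>_. 1"] Suc by simp
qed

lemma expect_k_mono:
  assumes "\<forall>e\<in>E. 0 \<le> q e \<and> q e \<le> 1" "\<And>Ss. Ss \<in> seqs E k \<Longrightarrow> f Ss \<le> g Ss"
  shows "expect_k E q k f \<le> expect_k E q k g"
  unfolding expect_k_def
  by (intro sum_mono mult_left_mono seq_weight_nonneg assms)

lemma expect_k_nonneg:
  assumes "\<forall>e\<in>E. 0 \<le> q e \<and> q e \<le> 1" "\<And>Ss. Ss \<in> seqs E k \<Longrightarrow> 0 \<le> f Ss"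
  shows "0 \<le> expect_k E q k f"
  unfolding expect_k_def by (intro sum_nonneg mult_nonneg_nonneg seq_weight_nonneg assms)

lemma expect_k_cmult: "expect_k E q k (\<lambda>Ss. c * f Ss) = c * expect_k E q k f"
  by (simp add: expect_k_def sum_distrib_left algebra_simps)

lemma expect_k_one_minus:
  assumes "finite E"
  shows "expect_k E q k (\<lambda>Ss. 1 - f Ss) = 1 - expect_k E q k f"
  using expect_k_one[OF assms, of q k]
  by (simp add: expect_k_def right_diff_distrib sum_subtractf)

lemma prob_k_eq_expect_k:
  assumes "finite E"
  shows "prob_k E q k P = expect_k E q k (\<lambda>Ss. of_bool (P Ss))"
  unfolding prob_k_def expect_k_def seq_weight_def sum.inter_filter[OF finite_seqs[OF assms]]
  by (rule sum.cong) auto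

lemma prob_k_not:
  assumes "finite E"
  shows "prob_k E q k (\<lambda>Ss. \<not> P Ss) = 1 - prob_k E q k P"
  unfolding prob_k_eq_expect_k[OF assms] expect_k_one_minus[OF assms, symmetric]
  by (simp add: of_bool_not_iff)

lemma prob_k_le_one:
  assumes "finite E" "\<forall>e\<in>E. 0 \<le> q e \<and> q e \<le> 1"
  shows "prob_k E q k P \<le> 1"
  unfolding prob_k_eq_expect_k[OF assms(1)]
  using expect_k_mono[OF assms(2), of k "\<lambda>Ss. of_bool (P Ss)" "\<lambda>_. 1"] expect_k_one[OF assms(1)]
  by simp

lemma markov_inequality:
  assumes "finite E" "\<forall>e\<in>E. 0 \<le> q e \<and> q e \<le> 1"
    and "\<And>Ss. Ss \<in> seqs E k \<Longrightarrow> 0 \<le> f Ss"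
  shows "t * prob_k E q k (\<lambda>Ss. t < f Ss) \<le> expect_k E q k f"
  unfolding prob_k_eq_expect_k[OF assms(1)] expect_k_cmult[symmetric]
  by (rule expect_k_mono[OF assms(2)]) (use assms(3) in force)

lemma expect_k_pos:
  assumes "finite E" "\<forall>e\<in>E. 0 \<le> q e \<and> q e \<le> 1"
    and nonneg: "\<And>Ss. Ss \<in> seqs E k \<Longrightarrow> 0 \<le> f Ss"
    and pos: "0 < prob_k E q k (\<lambda>Ss. 0 < f Ss)"
  shows "0 < expect_k E q k f"
proof -
  obtain Ss where Ss: "Ss \<in> seqs E k" "0 < f Ss" "0 < seq_weight E q Ss"
  proof (rule ccontr)
    assume "\<not> thesis"
    hence "\<forall>Ss\<in>{Ss \<in> seqs E k. 0 < f Ss}. seq_weight E q Ss \<le> 0"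
      using that by force
    hence "prob_k E q k (\<lambda>Ss. 0 < f Ss) \<le> 0"
      unfolding prob_k_def seq_weight_def[symmetric] by (intro sum_nonpos) auto
    thus False using pos by simp
  qed
  have "0 < seq_weight E q Ss * f Ss" using Ss by simp
  also have "\<dots> \<le> expect_k E q k f"
    unfolding expect_k_def using assms(1,2) nonneg seq_weight_nonneg
    by (intro member_le_sum Ss(1) finite_seqs mult_nonneg_nonneg) auto
  finally show ?thesis .
qed

section \<open>Exponential decay of \<delta>(T_k)\<close>

lemma prob_le_of_expect_le_power:
  assumes "finite E" "\<forall>e\<in>E. 0 \<le> q e \<and> q e \<le> 1" "0 < \<alpha>" "\<alpha> < 1" "0 < k"
    and "\<And>Ss. Ss \<in> seqs E k \<Longrightarrow> 0 \<le> f Ss"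
    and "expect_k E q k f \<le> \<alpha> ^ (4 * k)"
  shows "1 - \<alpha> ^ k < prob_k E q k (\<lambda>Ss. f Ss \<le> (\<alpha> ^ 2) ^ k)"
proof -
  have "\<alpha> ^ (2 * k) * prob_k E q k (\<lambda>Ss. \<alpha> ^ (2 * k) < f Ss) \<le> expect_k E q k f"
    by (rule markov_inequality[OF assms(1,2)]) (rule assms(6))
  also have "\<dots> \<le> \<alpha> ^ (2 * k) * \<alpha> ^ (2 * k)"
    using assms(7) by (simp flip: power_add)
  finally have "prob_k E q k (\<lambda>Ss. \<alpha> ^ (2 * k) < f Ss) \<le> \<alpha> ^ (2 * k)"
    using assms(3) by simp
  also have "\<dots> < \<alpha> ^ k"
    using assms(3-5) by (intro power_strict_decreasing) auto
  finally show ?thesis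
    using prob_k_not[OF assms(1), of q k "\<lambda>Ss. f Ss \<le> (\<alpha> ^ 2) ^ k"]
    by (simp add: not_le power_mult)
qed

lemma power_div_le_root_power:
  assumes "0 \<le> \<rho>" "\<rho> < 1" "0 < l"
  obtains \<alpha> :: real where "0 < \<alpha>" "\<alpha> < 1" "\<And>k. l \<le> k \<Longrightarrow> \<rho> ^ (k div l) \<le> \<alpha> ^ (4 * k)"
proof
  define \<rho>' where "\<rho>' = max \<rho> (1 / 2)"
  have \<rho>': "0 < \<rho>'" "\<rho>' < 1" "\<rho> \<le> \<rho>'" using assms(2) by (auto simp: \<rho>'_def)
  define \<alpha> where "\<alpha> = root (8 * l) \<rho>'"
  have pow: "\<alpha> ^ (8 * l) = \<rho>'"
    unfolding \<alpha>_def using \<rho>'(1) assms(3) by simp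
  show \<alpha>: "0 < \<alpha>" "\<alpha> < 1"
    unfolding \<alpha>_def using \<rho>' assms(3) by simp_all
  fix k assume "l \<le> k"
  have "k < k div l * l + l"
    using div_mult_mod_eq[of k l] mod_less_divisor[OF assms(3), of k] by linarith
  moreover have "l \<le> k div l * l"
    using div_le_mono[OF \<open>l \<le> k\<close>, of l] assms(3) by simp
  ultimately have "4 * k \<le> 8 * (k div l * l)" by linarith
  hence exponent: "4 * k \<le> 8 * l * (k div l)" by (simp add: mult_ac)
  have "\<rho> ^ (k div l) \<le> \<rho>' ^ (k div l)"
    using \<rho>'(3) assms(1) by (rule power_mono)
  also have "\<dots> = \<alpha> ^ (8 * l * (k div l))"
    by (simp only: power_mult[of \<alpha> "8 * l"] pow)
  also have "\<dots> \<le> \<alpha> ^ (4 * k)"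
    using \<alpha> exponent by (intro power_decreasing) auto
  finally show "\<rho> ^ (k div l) \<le> \<alpha> ^ (4 * k)" .
qed

lemma expect_delta_Tprod_le:
  assumes fV: "finite V" and ne: "V \<noteq> {}" and EV: "E \<subseteq> V \<times> V" and loops: "\<forall>i\<in>V. (i, i) \<in> E"
    and q01: "\<forall>e\<in>E. 0 \<le> q e \<and> q e \<le> 1"
  shows "expect_k E q (n * l + m) (\<lambda>Ss. delta (idxset V E) (Tprod V E Ss))
     \<le> expect_k E q l (\<lambda>Ss. lam (idxset V E) (Tprod V E Ss)) ^ n"
proof -
  let ?I = "idxset V E"
  let ?\<rho> = "expect_k E q l (\<lambda>Ss. lam ?I (Tprod V E Ss))"
  have finE: "finite E" using fV EV finite_subset by blast
  have fI: "finite ?I" using fV finE by (rule finite_idxset)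
  note stoch = stochastic_Tprod[OF fV EV loops]
  show ?thesis
  proof (induction n arbitrary: m)
    case 0
    have "expect_k E q m (\<lambda>Ss. delta ?I (Tprod V E Ss)) \<le> expect_k E q m (\<lambda>_. 1)"
      using q01 delta_le_one[OF fI idxset_not_empty[OF ne] stoch] by (rule expect_k_mono)
    thus ?case using expect_k_one[OF finE] by simp
  next
    case (Suc n)
    have "expect_k E q (l + (n * l + m)) (\<lambda>Ss. delta ?I (Tprod V E Ss))
        \<le> expect_k E q (l + (n * l + m))
            (\<lambda>Ss. lam ?I (Tprod V E (take l Ss)) * delta ?I (Tprod V E (drop l Ss)))"
      using q01 delta_Tprod_append_le[OF fV ne EV loops, of "take l Ss" "drop l Ss" for Ss]
      by (intro expect_k_mono) simp_all
    also have "\<dots> = ?\<rho> * expect_k E q (n * l + m) (\<lambda>Ss. delta ?I (Tprod V E Ss))"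
      by (rule expect_k_add)
    also have "\<dots> \<le> ?\<rho> * ?\<rho> ^ n"
      using Suc.IH q01 lam_nonneg[OF fI idxset_not_empty[OF ne] stoch]
      by (intro mult_left_mono expect_k_nonneg) auto
    finally show ?case by (simp add: add.assoc)
  qed
qed

lemma expect_lam_Tprod_less_one:
  assumes fV: "finite V" and ne: "V \<noteq> {}" and EV: "E \<subseteq> V \<times> V" and loops: "\<forall>i\<in>V. (i, i) \<in> E"
    and q01: "\<forall>e\<in>E. 0 \<le> q e \<and> q e \<le> 1"
    and scrambling_pos: "0 < prob_k E q l (\<lambda>Ss. scrambling (idxset V E) (Tprod V E Ss))"
  shows "expect_k E q l (\<lambda>Ss. lam (idxset V E) (Tprod V E Ss)) < 1"
proof -
  let ?I = "idxset V E"
  have finE: "finite E" using fV EV finite_subset by blast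
  have fI: "finite ?I" using fV finE by (rule finite_idxset)
  have "0 < expect_k E q l (\<lambda>Ss. 1 - lam ?I (Tprod V E Ss))"
  proof (rule expect_k_pos[OF finE q01])
    show "0 \<le> 1 - lam ?I (Tprod V E Ss)" for Ss
      using lam_le_one[OF fI idxset_not_empty[OF ne] stochastic_Tprod[OF fV EV loops]] by simp
    show "0 < prob_k E q l (\<lambda>Ss. 0 < 1 - lam ?I (Tprod V E Ss))"
      using scrambling_pos by (simp add: scrambling_def)
  qed
  thus ?thesis by (simp add: expect_k_one_minus[OF finE])
qed

theorem lemma2:
  fixes V :: "'a set" and E :: "('a \<times> 'a) set" and q :: "'a \<times> 'a \<Rightarrow> real" and l :: nat
  assumes finV: "finite V" and neV: "V \<noteq> {}"
    and EV: "E \<subseteq> V \<times> V"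
    and strong: "\<forall>i\<in>V. \<forall>j\<in>V. (i, j) \<in> E\<^sup>*"
    and loops: "\<forall>i\<in>V. (i, i) \<in> E"
    and qpos: "\<forall>e\<in>E. 0 < q e \<and> q e \<le> 1"
    and lpos: "0 < l"
    and col: "\<forall>i\<in>V. \<exists>Ss. length Ss = l \<and> (\<forall>S\<in>set Ss. S \<subseteq> E) \<and>
                 (\<forall>r\<in>idxset V E. Tprod V E Ss r (Inl i) > 0)"
    and wpos: "prob_k E q l (\<lambda>Ss. scrambling (idxset V E) (Tprod V E Ss)) > 0"
  shows "\<exists>\<alpha> \<beta>::real. 0 < \<alpha> \<and> \<alpha> < 1 \<and> 0 \<le> \<beta> \<and> \<beta> < 1 \<and>
           (\<forall>k::nat. real k \<ge> 8 * real l /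
                        prob_k E q l (\<lambda>Ss. scrambling (idxset V E) (Tprod V E Ss)) \<longrightarrow>
              prob_k E q k (\<lambda>Ss. delta (idxset V E) (Tprod V E Ss) \<le> \<beta> ^ k) > 1 - \<alpha> ^ k)"
proof -
  let ?I = "idxset V E"
  let ?w = "prob_k E q l (\<lambda>Ss. scrambling ?I (Tprod V E Ss))"
  let ?\<rho> = "expect_k E q l (\<lambda>Ss. lam ?I (Tprod V E Ss))"
  have finE: "finite E" using finV EV finite_subset by blast
  have fI: "finite ?I" using finV finE by (rule finite_idxset)
  have q01: "\<forall>e\<in>E. 0 \<le> q e \<and> q e \<le> 1" using qpos by force
  have \<rho>_nonneg: "0 \<le> ?\<rho>"
    using q01 lam_nonneg[OF fI idxset_not_empty[OF neV] stochastic_Tprod[OF finV EV loops]]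
    by (rule expect_k_nonneg)
  have \<rho>_less_one: "?\<rho> < 1"
    using finV neV EV loops q01 wpos by (rule expect_lam_Tprod_less_one)
  obtain \<alpha> where \<alpha>: "0 < \<alpha>" "\<alpha> < 1"
    and rate: "\<And>k. l \<le> k \<Longrightarrow> ?\<rho> ^ (k div l) \<le> \<alpha> ^ (4 * k)"
    using power_div_le_root_power[OF \<rho>_nonneg \<rho>_less_one lpos] by blast
  have tail: "1 - \<alpha> ^ k < prob_k E q k (\<lambda>Ss. delta ?I (Tprod V E Ss) \<le> (\<alpha> ^ 2) ^ k)"
    if "l \<le> k" for k
  proof (rule prob_le_of_expect_le_power[OF finE q01 \<alpha>])
    show "0 < k" using lpos that by simp
    show "0 \<le> delta ?I (Tprod V E Ss)" for Ss
      using fI idxset_not_empty[OF neV] by (rule delta_nonneg)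
    have "expect_k E q (k div l * l + k mod l) (\<lambda>Ss. delta ?I (Tprod V E Ss)) \<le> ?\<rho> ^ (k div l)"
      using finV neV EV loops q01 by (rule expect_delta_Tprod_le)
    thus "expect_k E q k (\<lambda>Ss. delta ?I (Tprod V E Ss)) \<le> \<alpha> ^ (4 * k)"
      using rate[OF that] by simp
  qed
  have "l \<le> k" if "8 * real l / ?w \<le> real k" for k
  proof -
    have "8 * real l \<le> 8 * real l / ?w"
      using wpos prob_k_le_one[OF finE q01] by (simp add: le_divide_eq mult_left_le)
    thus ?thesis using that by linarith
  qed
  thus ?thesis
    using \<alpha> tail by (intro exI[of _ \<alpha>] exI[of _ "\<alpha> ^ 2"]) (simp add: power_less_one_iff)
qed

end
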